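(* Let $k\geq 2$ be an integer and let $l\in\{1,2\}$. Then there are infinitely many balanced bipartite graphs $G$ with $\delta(G)=k$ and $f(G)=\frac{|V(G)|}{2}+l$.
   Context: All graphs are finite and simple. A balanced bipartite graph is a bipartite graph with a given bipartition $(V_1,V_2)$ where $|V_1|=|V_2|$. $\delta(G)$ denotes the minimum degree of $G$. The forest number $f(G)$ is the maximum cardinality of a subset $S\subseteq V(G)$ such that the induced subgraph $G[S]$ is a forest. *)

theory Defs
  imports Main
begin

definition simple_graph :: "'a set \<Rightarrow> ('a \<Rightarrow> 'a \<Rightarrow> bool) \<Rightarrow> bool" where
  "simple_graph V E \<longleftrightarrow> finite V \<and> (\<forall>u v. E u v \<longrightarrow> u \<in> V \<and> v \<in> V)
     \<and> (\<forall>u v. E u v \<longrightarrow> E v u) \<and> (\<forall>v. \<not> E v v)"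

definition balanced_bipartite ::
  "'a set \<Rightarrow> ('a \<Rightarrow> 'a \<Rightarrow> bool) \<Rightarrow> 'a set \<Rightarrow> 'a set \<Rightarrow> bool" where
  "balanced_bipartite V E V1 V2 \<longleftrightarrow> simple_graph V E \<and> V1 \<inter> V2 = {} \<and> V1 \<union> V2 = V
     \<and> card V1 = card V2
     \<and> (\<forall>u v. E u v \<longrightarrow> (u \<in> V1 \<and> v \<in> V2) \<or> (u \<in> V2 \<and> v \<in> V1))"

definition degree :: "'a set \<Rightarrow> ('a \<Rightarrow> 'a \<Rightarrow> bool) \<Rightarrow> 'a \<Rightarrow> nat" where
  "degree V E v = card {u \<in> V. E v u}"

definition min_degree :: "'a set \<Rightarrow> ('a \<Rightarrow> 'a \<Rightarrow> bool) \<Rightarrow> nat" where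
  "min_degree V E = Min (degree V E ` V)"

definition has_cycle_in :: "'a set \<Rightarrow> ('a \<Rightarrow> 'a \<Rightarrow> bool) \<Rightarrow> bool" where
  "has_cycle_in S E \<longleftrightarrow> (\<exists>xs. length xs \<ge> 3 \<and> distinct xs \<and> set xs \<subseteq> S
     \<and> (\<forall>i. Suc i < length xs \<longrightarrow> E (xs ! i) (xs ! Suc i)) \<and> E (last xs) (hd xs))"

definition induced_forest :: "'a set \<Rightarrow> ('a \<Rightarrow> 'a \<Rightarrow> bool) \<Rightarrow> 'a set \<Rightarrow> bool" where
  "induced_forest V E S \<longleftrightarrow> S \<subseteq> V \<and> \<not> has_cycle_in S E"

definition forest_number :: "'a set \<Rightarrow> ('a \<Rightarrow> 'a \<Rightarrow> bool) \<Rightarrow> nat" where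
  "forest_number V E = Max {card S | S. induced_forest V E S}"

end

theory Submission
  imports Defs
begin

text \<open>Take sides \<open>V\<^sub>1 = {0..<m}\<close> and \<open>V\<^sub>2 = {m..<2m}\<close>. The first \<open>l\<close> vertices of
\<open>V\<^sub>1\<close> are hubs, each joined to its own block of \<open>k\<close> vertices of \<open>V\<^sub>2\<close>; every other
vertex of \<open>V\<^sub>1\<close> is joined to all of \<open>V\<^sub>2\<close>. Hubs have degree \<open>k\<close>, all other degrees are
at least \<open>k\<close>. The hubs together with \<open>V\<^sub>2\<close> induce a disjoint union of stars, a forest on
\<open>m + l\<close> vertices. Conversely, a vertex set of size \<open>m + l + 1\<close> either meets both the
non-hubs and \<open>V\<^sub>2\<close> in two vertices each, giving a 4-cycle in the complete bipartite part,
or it contains all of \<open>V\<^sub>2\<close>, all hubs and one non-hub, which close a 4-cycle through the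
first hub and two vertices of its block (here \<open>k \<ge> 2\<close> is used).\<close>

lemma has_cycle_in_four:
  assumes "distinct [a, b, c, d]" "{a, b, c, d} \<subseteq> S" "E a b" "E b c" "E c d" "E d a"
  shows "has_cycle_in S E"
  unfolding has_cycle_in_def
proof (intro exI[of _ "[a, b, c, d]"] conjI allI impI)
  fix i assume "Suc i < length [a, b, c, d]"
  then have "i = 0 \<or> i = 1 \<or> i = 2" by auto
  then show "E ([a, b, c, d] ! i) ([a, b, c, d] ! Suc i)" using assms by auto
qed (use assms in auto)

lemma has_cycle_in_obtain_path:
  assumes "has_cycle_in S E"
  obtains x0 x1 x2 x3 where "{x0, x1, x2, x3} \<subseteq> S" "E x0 x1" "E x1 x2" "E x2 x3"
    "x0 \<noteq> x2" "x1 \<noteq> x3"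
proof -
  obtain xs where len: "length xs \<ge> 3" and dist: "distinct xs" and sub: "set xs \<subseteq> S"
    and step: "\<forall>i. Suc i < length xs \<longrightarrow> E (xs ! i) (xs ! Suc i)" and close: "E (last xs) (hd xs)"
    using assms unfolding has_cycle_in_def by blast
  have in_S: "xs ! i \<in> S" if "i < length xs" for i
    using sub nth_mem[OF that] by blast
  have "xs \<noteq> []" using len by auto
  have neq: "xs ! i \<noteq> xs ! j" if "i < length xs" "j < length xs" "i \<noteq> j" for i j
    using nth_eq_iff_index_eq[OF dist that(1,2)] that(3) by simp
  have E012: "E (xs ! 0) (xs ! 1)" "E (xs ! 1) (xs ! 2)"
    using step len by (auto simp: numeral_2_eq_2)
  show thesis
  proof (cases "length xs = 3")
    case True
    have "last xs = xs ! 2" "hd xs = xs ! 0"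
      using True \<open>xs \<noteq> []\<close> by (simp_all add: last_conv_nth hd_conv_nth)
    then show thesis
      using that[of "xs ! 0" "xs ! 1" "xs ! 2" "xs ! 0"] E012 close True in_S neq by auto
  next
    case False
    then have len3: "3 < length xs" using len by simp
    then have "E (xs ! 2) (xs ! 3)"
      using step by (simp add: numeral_3_eq_3 numeral_2_eq_2)
    moreover have "{xs ! 0, xs ! 1, xs ! 2, xs ! 3} \<subseteq> S"
      using len3 \<open>xs \<noteq> []\<close> in_S[of 0] in_S[of 1] in_S[of 2] in_S[of 3] by auto
    ultimately show thesis
      using that E012 len3 \<open>xs \<noteq> []\<close> neq[of 0 2] neq[of 1 3] by auto
  qed
qed

lemma not_has_cycle_in_star_forest:
  assumes sym: "\<And>u v. E u v \<Longrightarrow> E v u"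
    and indep: "\<And>c c'. c \<in> C \<Longrightarrow> c' \<in> C \<Longrightarrow> \<not> E c c'"
    and leaf: "\<And>v u w. v \<in> S - C \<Longrightarrow> u \<in> S \<Longrightarrow> w \<in> S \<Longrightarrow> E v u \<Longrightarrow> E v w \<Longrightarrow> u = w"
  shows "\<not> has_cycle_in S E"
proof
  assume "has_cycle_in S E"
  then obtain x0 x1 x2 x3 where S: "{x0, x1, x2, x3} \<subseteq> S"
    and E: "E x0 x1" "E x1 x2" "E x2 x3" and neq: "x0 \<noteq> x2" "x1 \<noteq> x3"
    by (rule has_cycle_in_obtain_path)
  show False
  proof (cases "x1 \<in> C")
    case False
    then show False using leaf[of x1 x0 x2] S sym[OF E(1)] E(2) neq(1) by auto
  next
    case True
    then have "x2 \<notin> C" using indep E(2) by blast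
    then show False using leaf[of x2 x1 x3] S sym[OF E(2)] E(3) neq(2) by auto
  qed
qed

lemma forest_number_eqI:
  assumes "finite V" "induced_forest V E S\<^sub>0" "card S\<^sub>0 = n"
    and "\<And>S. S \<subseteq> V \<Longrightarrow> n < card S \<Longrightarrow> has_cycle_in S E"
  shows "forest_number V E = n"
  unfolding forest_number_def
proof (rule Max_eqI)
  have "{card S |S. induced_forest V E S} \<subseteq> card ` Pow V"
    unfolding induced_forest_def by blast
  then show "finite {card S |S. induced_forest V E S}"
    using assms(1) finite_subset by blast
  show "n \<in> {card S |S. induced_forest V E S}" using assms(2,3) by blast
next
  fix y assume "y \<in> {card S |S. induced_forest V E S}"
  then show "y \<le> n" using assms(4) unfolding induced_forest_def by force
qed

lemma min_degree_eqI:
  assumes "finite V" "v \<in> V" "degree V E v = k" "\<And>u. u \<in> V \<Longrightarrow> k \<le> degree V E u"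
  shows "min_degree V E = k"
  unfolding min_degree_def using assms by (intro Min_eqI) auto

lemma le_degree_if_neighbours:
  assumes "finite V" "A \<subseteq> {u \<in> V. E v u}"
  shows "card A \<le> degree V E v"
  unfolding degree_def using assms by (intro card_mono) auto

definition block_adj :: "nat \<Rightarrow> nat \<Rightarrow> nat \<Rightarrow> nat \<Rightarrow> nat \<Rightarrow> bool" where
  "block_adj m k l i j \<longleftrightarrow> i < m \<and> j < m \<and> (l \<le> i \<or> (i * k \<le> j \<and> j < i * k + k))"

definition block_graph :: "nat \<Rightarrow> nat \<Rightarrow> nat \<Rightarrow> nat \<Rightarrow> nat \<Rightarrow> bool" where
  "block_graph m k l u v \<longleftrightarrow>
     (u < m \<and> m \<le> v \<and> block_adj m k l u (v - m)) \<or> (v < m \<and> m \<le> u \<and> block_adj m k l v (u - m))"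

lemma balanced_bipartite_block_graph:
  "balanced_bipartite {0..<2 * m} (block_graph m k l) {0..<m} {m..<2 * m}"
  unfolding balanced_bipartite_def simple_graph_def
  by (auto simp: block_graph_def block_adj_def)

lemma degree_block_graph_hub:
  assumes "i < l" "l * k \<le> m" "0 < k"
  shows "degree {0..<2 * m} (block_graph m k l) i = k"
proof -
  have "i * k + k \<le> l * k" using mult_le_mono1[of "Suc i" l k] assms(1) by simp
  moreover have "i \<le> i * k" using assms(3) by simp
  ultimately have "i < m" using assms by linarith
  with \<open>i * k + k \<le> l * k\<close>
  have "{u \<in> {0..<2 * m}. block_graph m k l i u} = {m + i * k..<m + i * k + k}"
    using assms by (auto simp: block_graph_def block_adj_def)
  then show ?thesis unfolding degree_def by simp
qed

lemma min_degree_block_graph: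
  assumes "1 \<le> l" "0 < k" "l * k + k \<le> m"
  shows "min_degree {0..<2 * m} (block_graph m k l) = k"
proof (rule min_degree_eqI)
  show "degree {0..<2 * m} (block_graph m k l) 0 = k"
    using assms by (intro degree_block_graph_hub) auto
  have "l \<le> l * k" using assms(2) by simp
  then have "l + k \<le> m" using assms(3) by linarith
  fix v assume v: "v \<in> {0..<2 * m}"
  consider "v < l" | "l \<le> v" "v < m" | "m \<le> v" "v < 2 * m" using v by fastforce
  then show "k \<le> degree {0..<2 * m} (block_graph m k l) v"
  proof cases
    case 1
    then show ?thesis using assms by (simp add: degree_block_graph_hub)
  next
    case 2
    then have "card {m..<2 * m} \<le> degree {0..<2 * m} (block_graph m k l) v"
      by (intro le_degree_if_neighbours) (auto simp: block_graph_def block_adj_def)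
    then show ?thesis using \<open>l + k \<le> m\<close> by simp
  next
    case 3
    then have "card {l..<m} \<le> degree {0..<2 * m} (block_graph m k l) v"
      by (intro le_degree_if_neighbours) (auto simp: block_graph_def block_adj_def)
    then show ?thesis using \<open>l + k \<le> m\<close> by simp
  qed
qed (use assms in auto)

lemma induced_forest_block_graph:
  assumes "l \<le> m"
  shows "induced_forest {0..<2 * m} (block_graph m k l) ({0..<l} \<union> {m..<2 * m})"
  unfolding induced_forest_def
proof
  show "{0..<l} \<union> {m..<2 * m} \<subseteq> {0..<2 * m}" using assms by auto
  show "\<not> has_cycle_in ({0..<l} \<union> {m..<2 * m}) (block_graph m k l)"
  proof (rule not_has_cycle_in_star_forest[where C = "{0..<l}"])
    fix v u w
    assume v: "v \<in> ({0..<l} \<union> {m..<2 * m}) - {0..<l}"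
      and u: "u \<in> {0..<l} \<union> {m..<2 * m}" and w: "w \<in> {0..<l} \<union> {m..<2 * m}"
      and vu: "block_graph m k l v u" and vw: "block_graph m k l v w"
    have "m \<le> v" using v assms by auto
    have div_eq: "(v - m) div k = x"
      if "x \<in> {0..<l} \<union> {m..<2 * m}" "block_graph m k l v x" for x
    proof -
      have "x < l" "x * k \<le> v - m" "v - m < x * k + k"
        using that \<open>m \<le> v\<close> v by (auto simp: block_graph_def block_adj_def)
      then show ?thesis by (intro div_nat_eqI) (auto simp: mult.commute)
    qed
    show "u = w" using div_eq[OF u vu] div_eq[OF w vw] by simp
  qed (use assms in \<open>auto simp: block_graph_def\<close>)
qed

lemma has_cycle_in_block_graph:
  assumes k: "2 \<le> k" and l: "1 \<le> l" "l * k + k \<le> m"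
    and S: "S \<subseteq> {0..<2 * m}" and large: "m + l < card S"
  shows "has_cycle_in S (block_graph m k l)"
proof -
  define L A B where "L = S \<inter> {0..<l}" and "A = S \<inter> {l..<m}" and "B = S \<inter> {m..<2 * m}"
  have "l \<le> l * k" using k by simp
  then have lm: "l + 2 \<le> m" using l k by linarith
  have fin: "finite L" "finite A" "finite B" unfolding L_def A_def B_def by simp_all
  have "card (L \<union> A) = card L + card A"
    using fin by (intro card_Un_disjoint) (auto simp: L_def A_def)
  moreover have "card (L \<union> A \<union> B) = card (L \<union> A) + card B"
    using fin lm by (intro card_Un_disjoint) (auto simp: L_def A_def B_def)
  moreover have "S = L \<union> A \<union> B" using S unfolding L_def A_def B_def by auto
  ultimately have card_S: "card S = card L + card A + card B" by simp
  have "card L \<le> l" "card A \<le> m - l" "card B \<le> m"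
    using card_mono[of "{0..<l}" L] card_mono[of "{l..<m}" A] card_mono[of "{m..<2 * m}" B]
    unfolding L_def A_def B_def by auto
  have edge_AB: "block_graph m k l a b" "block_graph m k l b a" if "a \<in> A" "b \<in> B" for a b
    using that unfolding L_def A_def B_def by (auto simp: block_graph_def block_adj_def)
  show ?thesis
  proof (cases "card A \<le> 1")
    case False
    then obtain a a' where a: "a \<in> A" "a' \<in> A" "a \<noteq> a'"
      using card_le_Suc0_iff_eq[OF fin(2)] by auto
    have "\<not> card B \<le> 1"
      using False card_S large \<open>card L \<le> l\<close> \<open>card A \<le> m - l\<close> l(1) lm by linarith
    then obtain b b' where b: "b \<in> B" "b' \<in> B" "b \<noteq> b'"
      using card_le_Suc0_iff_eq[OF fin(3)] by auto
    have "a < m" "m \<le> b" "m \<le> b'" using a b unfolding L_def A_def B_def by auto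
    then show ?thesis
      using a b edge_AB unfolding L_def A_def B_def
      by (intro has_cycle_in_four[of a b a' b']) auto
  next
    case True
    then have "card A = 1" "card L = l" "card B = m"
      using card_S large \<open>card L \<le> l\<close> \<open>card B \<le> m\<close> by linarith+
    obtain a where "A = {a}" using \<open>card A = 1\<close> by (rule card_1_singletonE)
    have "L = {0..<l}" "B = {m..<2 * m}"
      using card_subset_eq[of "{0..<l}" L] card_subset_eq[of "{m..<2 * m}" B]
        \<open>card L = l\<close> \<open>card B = m\<close> unfolding L_def B_def by auto
    then have "{0, m, m + 1} \<subseteq> S" using l lm unfolding L_def A_def B_def by auto
    moreover have "a \<in> S" "l \<le> a" "a < m" using \<open>A = {a}\<close> unfolding A_def by auto
    ultimately show ?thesis using k l lm
      by (intro has_cycle_in_four[of 0 m a "m + 1"]) (auto simp: block_graph_def block_adj_def)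
  qed
qed

lemma forest_number_block_graph:
  assumes "2 \<le> k" "1 \<le> l" "l * k + k \<le> m"
  shows "forest_number {0..<2 * m} (block_graph m k l) = m + l"
proof -
  have "l \<le> l * k" using assms(1) by simp
  then have "l \<le> m" using assms(3) by linarith
  then show ?thesis
    using assms has_cycle_in_block_graph induced_forest_block_graph
    by (intro forest_number_eqI[where S\<^sub>0 = "{0..<l} \<union> {m..<2 * m}"])
      (auto simp: card_Un_disjoint)
qed

theorem theorem2p7:
  fixes k l :: nat
  assumes "k \<ge> 2" and "l \<in> {1, 2}"
  shows "\<forall>N. \<exists>(V :: nat set) E V1 V2. card V \<ge> N \<and> balanced_bipartite V E V1 V2
           \<and> min_degree V E = k \<and> 2 * forest_number V E = card V + 2 * l"
proof
  fix N
  define m where "m = N + 3 * k"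
  have l: "1 \<le> l" "l * k + k \<le> m" using assms(2) unfolding m_def by auto
  have "0 < k" using assms(1) by simp
  show "\<exists>(V :: nat set) E V1 V2. card V \<ge> N \<and> balanced_bipartite V E V1 V2
           \<and> min_degree V E = k \<and> 2 * forest_number V E = card V + 2 * l"
    using balanced_bipartite_block_graph min_degree_block_graph[OF l(1) \<open>0 < k\<close> l(2)]
      forest_number_block_graph[OF assms(1) l]
    by (intro exI[of _ "{0..<2 * m}"] exI[of _ "block_graph m k l"] exI) (auto simp: m_def)
qed

end
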